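(* Let $\rho,\sigma$ be $n$-qubit pure states and let $\epsilon>0$, $\delta>0$. Let $\tilde p_{\mathrm{mix}}$ be a distribution with $\|p_{\mathrm{mix}}-\tilde p_{\mathrm{mix}}\|_{\mathrm{TV}}<\Delta$, and let $M_0=\max(M_0(\rho),M_0(\sigma))$. Let $f=\frac12(1+\mathrm{tr}(\rho\sigma))$ and let $f(N_1,N_2)$ be the symmetric-protocol estimator. Then $|f(N_1,N_2)-f|\le 5\epsilon+2\Delta$ with probability at least $1-\delta$, provided that $$N_1\ge\frac{1}{2\epsilon^2}\log(8/\delta),\qquad N_2\ge\frac{2}{\min(\epsilon^4,\epsilon^2 2^{-2M_0})}\log(8N_1/\delta).$$
   Context: $\log$ is base 2. Pauli strings $P_x$, $x\in\{0,1\}^{2n}$, are the $n$-qubit Hermitian Pauli strings; $\alpha_\rho(x)=\mathrm{tr}(\rho P_x)$; $p_\rho(x)=\alpha_\rho(x)^2/2^n$ for pure $\rho$; $p_{\mathrm{mix}}=\frac12(p_\rho+p_\sigma)$. $M_0(\rho)=\log_2|\{x:\alpha_\rho(x)\ne0\}|-n$. Symmetric protocol: draw $x_1,\dots,x_{N_1}$ i.i.d. from $\tilde p_{\mathrm{mix}}$; for each $i$, measure $P_{x_i}$ $N_2$ times on copies of $\rho$ and $N_2$ times on copies of $\sigma$, obtaining empirical means $\hat\alpha_\rho(x_i),\hat\alpha_\sigma(x_i)$ of the $\pm1$ outcomes; output $f(N_1,N_2)=\frac{1}{N_1}\sum_iG(\hat\alpha_\rho(x_i),\hat\alpha_\sigma(x_i))$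 with $G(u,v)=\frac12\frac{(u+v)^2}{u^2+v^2}$ (and $G(0,0)$ an arbitrary fixed value in $[0,1]$). *)

theory Defs
  imports "HOL-Probability.Probability"
begin

text \<open>Computational basis of n qubits: bit strings of length n.
  An operator is a complex matrix indexed by basis labels.\<close>

definition basis :: "nat \<Rightarrow> bool list set" where
  "basis n = {bs. length bs = n}"

type_synonym op = "bool list \<Rightarrow> bool list \<Rightarrow> complex"

definition tr :: "nat \<Rightarrow> op \<Rightarrow> complex" where
  "tr n A = (\<Sum>r\<in>basis n. A r r)"

definition opmult :: "nat \<Rightarrow> op \<Rightarrow> op \<Rightarrow> op" where
  "opmult n A B = (\<lambda>r c. \<Sum>k\<in>basis n. A r k * B k c)"

definition pure_state :: "nat \<Rightarrow> op \<Rightarrow> bool" where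
  "pure_state n \<rho> \<longleftrightarrow> (\<exists>\<psi> :: bool list \<Rightarrow> complex.
      (\<Sum>b\<in>basis n. (cmod (\<psi> b))\<^sup>2) = 1 \<and>
      (\<forall>r\<in>basis n. \<forall>c\<in>basis n. \<rho> r c = \<psi> r * cnj (\<psi> c)))"

text \<open>A Pauli string label x in {0,1}^(2n) is a list of n bit pairs (a_i,b_i);
  (0,0) = I, (1,0) = X, (0,1) = Z, (1,1) = Y.\<close>

definition paulis :: "nat \<Rightarrow> (bool \<times> bool) list set" where
  "paulis n = {x. length x = n}"

fun pauli1 :: "bool \<times> bool \<Rightarrow> bool \<Rightarrow> bool \<Rightarrow> complex" where
  "pauli1 (False, False) r c = (if r = c then 1 else 0)"
| "pauli1 (True, False) r c = (if r = c then 0 else 1)"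
| "pauli1 (False, True) r c = (if r = c then (if r then -1 else 1) else 0)"
| "pauli1 (True, True) r c = (if r = c then 0 else (if r then \<i> else -\<i>))"

definition pauli :: "(bool \<times> bool) list \<Rightarrow> op" where
  "pauli x = (\<lambda>r c. \<Prod>i<length x. pauli1 (x ! i) (r ! i) (c ! i))"

definition alpha :: "nat \<Rightarrow> op \<Rightarrow> (bool \<times> bool) list \<Rightarrow> real" where
  "alpha n \<rho> x = Re (tr n (opmult n \<rho> (pauli x)))"

definition p_dist :: "nat \<Rightarrow> op \<Rightarrow> (bool \<times> bool) list \<Rightarrow> real" where
  "p_dist n \<rho> x = (alpha n \<rho> x)\<^sup>2 / 2 ^ n"

definition p_mix :: "nat \<Rightarrow> op \<Rightarrow> op \<Rightarrow> (bool \<times> bool) list \<Rightarrow> real" where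
  "p_mix n \<rho> \<sigma> x = (p_dist n \<rho> x + p_dist n \<sigma> x) / 2"

definition M0 :: "nat \<Rightarrow> op \<Rightarrow> real" where
  "M0 n \<rho> = log 2 (real (card {x\<in>paulis n. alpha n \<rho> x \<noteq> 0})) - real n"

definition tv_dist :: "nat \<Rightarrow> ((bool \<times> bool) list \<Rightarrow> real) \<Rightarrow> (bool \<times> bool) list pmf \<Rightarrow> real" where
  "tv_dist n p q = (1/2) * (\<Sum>x\<in>paulis n. \<bar>p x - pmf q x\<bar>)"

text \<open>G(u,v); the value at (0,0) is the fixed parameter g0.\<close>
definition Gfun :: "real \<Rightarrow> real \<Rightarrow> real \<Rightarrow> real" where
  "Gfun g0 u v = (if u = 0 \<and> v = 0 then g0 else (1/2) * (u + v)\<^sup>2 / (u\<^sup>2 + v\<^sup>2))"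

text \<open>Measuring the Pauli observable P_x on state rho gives +1 with probability
  tr(rho (I+P_x)/2) = (1 + alpha(x))/2 (Born rule), else -1.
  Empirical mean of N2 i.i.d. such measurements.\<close>
definition meas_outcome :: "nat \<Rightarrow> op \<Rightarrow> (bool \<times> bool) list \<Rightarrow> real pmf" where
  "meas_outcome n \<rho> x =
     map_pmf (\<lambda>b. if b then 1 else -1) (bernoulli_pmf ((1 + alpha n \<rho> x) / 2))"

definition emp_mean :: "nat \<Rightarrow> op \<Rightarrow> (bool \<times> bool) list \<Rightarrow> nat \<Rightarrow> real pmf" where
  "emp_mean n \<rho> x N2 =
     map_pmf (\<lambda>ys. sum_list ys / real N2) (replicate_pmf N2 (meas_outcome n \<rho> x))"

definition protocol_round ::
  "nat \<Rightarrow> op \<Rightarrow> op \<Rightarrow> (bool \<times> bool) list pmf \<Rightarrow> nat \<Rightarrow> real \<Rightarrow> real pmf" where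
  "protocol_round n \<rho> \<sigma> q N2 g0 = do {
      x \<leftarrow> q;
      u \<leftarrow> emp_mean n \<rho> x N2;
      v \<leftarrow> emp_mean n \<sigma> x N2;
      return_pmf (Gfun g0 u v) }"

text \<open>Distribution of the output f(N1,N2): average over N1 i.i.d. rounds.\<close>
definition sym_protocol ::
  "nat \<Rightarrow> op \<Rightarrow> op \<Rightarrow> (bool \<times> bool) list pmf \<Rightarrow> nat \<Rightarrow> nat \<Rightarrow> real \<Rightarrow> real pmf" where
  "sym_protocol n \<rho> \<sigma> q N1 N2 g0 =
     map_pmf (\<lambda>gs. sum_list gs / real N1) (replicate_pmf N1 (protocol_round n \<rho> \<sigma> q N2 g0))"

end

theory Submission
  imports Defs
begin

(*
  For pure states the Pauli coefficients satisfy sum_x alpha_rho(x) alpha_sigma(x) = 2^n tr(rho sigma)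
  and sum_x alpha_rho(x)^2 = 2^n, so f = sum_x p_mix(x) G(alpha_rho(x), alpha_sigma(x)) with G in [0, 1];
  sampling x from q instead of p_mix therefore costs at most 2 Delta.

  G(u, v) = (1 + sin 2 theta) / 2 depends only on the angle theta of (u, v).  Hence, on labels with
  alpha_rho^2 + alpha_sigma^2 > tau = eps 2^(-M0), estimates of the coefficients that are accurate to
  t ~ eps sqrt tau change G by at most 2 eps, while the remaining labels carry p_mix-mass at most eps,
  because at most 2^(M0 + n + 1) labels have a nonzero coefficient.  So the value of each round lies
  between deterministic lower and upper envelopes of G(alpha_rho(x), alpha_sigma(x)) unless one of its
  estimates is inaccurate.  Hoeffding's inequality is used twice: over the N2 measurements, all N1 rounds
  are accurate except with probability 4 N1 exp(-N2 t^2 / 2); over the N1 rounds, the averages of the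
  two envelopes are within eps of their expectations except with probability 2 exp(-2 N1 eps^2).
*)

section \<open>Averages of independent samples\<close>

lemma replicate_pmf_eq_map_Pi_pmf:
  "replicate_pmf n p = map_pmf (\<lambda>f. map f [0..<n]) (Pi_pmf {..<n} d (\<lambda>_. p))"
proof (induction n)
  case (Suc n)
  have lessThan_Suc: "{..<Suc n} = insert 0 (Suc ` {..<n})"
    by (auto simp: image_iff) (metis less_Suc_eq_0_disj lessThan_iff)
  have shift: "Pi_pmf {..<n} d (\<lambda>_. p) = map_pmf (\<lambda>f. f \<circ> Suc) (Pi_pmf (Suc ` {..<n}) d (\<lambda>_. p))"
    by (rule Pi_pmf_bij_betw) (auto simp: bij_betw_def)
  have map_upt_Suc: "map f [0..<Suc n] = f 0 # map (f \<circ> Suc) [0..<n]" for f :: "nat \<Rightarrow> 'a"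
    by (simp add: upt_conv_Cons map_Suc_upt[symmetric] del: upt_Suc)
  have "map_pmf (\<lambda>f. map f [0..<Suc n]) (Pi_pmf {..<Suc n} d (\<lambda>_. p)) =
     do {y \<leftarrow> p; f \<leftarrow> Pi_pmf (Suc ` {..<n}) d (\<lambda>_. p); return_pmf (y # map (f \<circ> Suc) [0..<n])}"
    unfolding lessThan_Suc by (subst Pi_pmf_insert') (auto simp: map_bind_pmf map_upt_Suc o_def simp del: upt_Suc)
  also have "\<dots> = replicate_pmf (Suc n) p"
    by (simp add: Suc.IH shift bind_map_pmf map_pmf_comp o_def)
  finally show ?case by simp
qed simp

lemma replicate_pmf_map_pmf: "replicate_pmf n (map_pmf f p) = map_pmf (map f) (replicate_pmf n p)"
  by (induction n) (simp_all add: map_bind_pmf bind_map_pmf)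

lemma prob_replicate_pmf_exists_le:
  "measure_pmf.prob (replicate_pmf n p) {xs. \<exists>x\<in>set xs. x \<in> A} \<le> n * measure_pmf.prob p A"
proof -
  define M where "M = Pi_pmf {..<n} undefined (\<lambda>_. p)"
  have "measure_pmf.prob (replicate_pmf n p) {xs. \<exists>x\<in>set xs. x \<in> A} =
      measure_pmf.prob M (\<Union>i\<in>{..<n}. (\<lambda>f. f i) -` A)"
    unfolding replicate_pmf_eq_map_Pi_pmf[of n p undefined] M_def
    by (simp add: vimage_def) (intro arg_cong[where f = "measure_pmf.prob _"]; auto)
  also have "\<dots> \<le> (\<Sum>i\<in>{..<n}. measure_pmf.prob M ((\<lambda>f. f i) -` A))"
    by (rule measure_pmf.finite_measure_subadditive_finite) auto
  also have "\<dots> = (\<Sum>i\<in>{..<n}. measure_pmf.prob (map_pmf (\<lambda>f. f i) M) A)"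
    by simp
  also have "\<dots> = n * measure_pmf.prob p A"
    by (simp add: M_def Pi_pmf_component)
  finally show ?thesis .
qed

lemma prob_bind_pmf_le:
  assumes "\<And>x. x \<in> set_pmf p \<Longrightarrow> measure_pmf.prob (K x) A \<le> c"
  shows "measure_pmf.prob (bind_pmf p K) A \<le> c"
proof -
  obtain x0 where "x0 \<in> set_pmf p" using set_pmf_not_empty[of p] by blast
  then have "c \<ge> 0" using assms measure_nonneg order.trans by blast
  have "emeasure (measure_pmf (bind_pmf p K)) A = (\<integral>\<^sup>+x. emeasure (measure_pmf (K x)) A \<partial>measure_pmf p)"
    by simp
  also have "\<dots> \<le> (\<integral>\<^sup>+x. ennreal c \<partial>measure_pmf p)"
    using assms \<open>c \<ge> 0\<close>
    by (intro nn_integral_mono_AE AE_pmfI) (simp add: measure_pmf.emeasure_eq_measure)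
  also have "\<dots> = ennreal c" by (simp add: measure_pmf.emeasure_space_1)
  finally show ?thesis using \<open>c \<ge> 0\<close> by (simp add: measure_pmf.emeasure_eq_measure)
qed

lemma iid_interval_bounded_random_variables_Pi_pmf:
  fixes p :: "'a pmf" and g :: "'a \<Rightarrow> real" and n :: nat
  assumes range: "\<And>x. x \<in> set_pmf p \<Longrightarrow> g x \<in> {a..b}" and "n > 0"
  shows "iid_interval_bounded_random_variables (measure_pmf (Pi_pmf {..<n} d (\<lambda>_. p)))
           {..<n} (\<lambda>i f. g (f i)) (\<lambda>f. g (f 0)) a b"
proof -
  define M where "M = Pi_pmf {..<n} d (\<lambda>_. p)"
  have component: "map_pmf (\<lambda>f. f i) M = p" if "i < n" for i
    using that by (simp add: M_def Pi_pmf_component)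
  have distr_component: "distr (measure_pmf M) borel (\<lambda>f. g (f i)) = distr (measure_pmf p) borel g"
    if "i < n" for i
  proof -
    have "distr (measure_pmf M) borel (\<lambda>f. g (f i)) = distr (measure_pmf (map_pmf (\<lambda>f. f i) M)) borel g"
      unfolding map_pmf_rep_eq by (subst distr_distr) (auto simp: o_def)
    then show ?thesis using component[OF that] by simp
  qed
  show ?thesis
    unfolding M_def[symmetric]
  proof unfold_locales
    show "prob_space.indep_vars (measure_pmf M) (\<lambda>_. borel) (\<lambda>i f. g (f i)) {..<n}"
      unfolding M_def
      by (intro prob_space.indep_vars_compose2[OF _ indep_vars_Pi_pmf])
         (auto simp: measure_pmf.prob_space_axioms)
    show "AE f in measure_pmf M. g (f 0) \<in> {a..b}"
    proof (rule AE_pmfI)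
      fix f assume "f \<in> set_pmf M"
      then have "f 0 \<in> set_pmf (map_pmf (\<lambda>f. f 0) M)" by simp
      then show "g (f 0) \<in> {a..b}" using component[of 0] \<open>n > 0\<close> range by simp
    qed
    show "distr (measure_pmf M) borel (\<lambda>f. g (f i)) = distr (measure_pmf M) borel (\<lambda>f. g (f 0))"
      if "i \<in> {..<n}" for i
      using that \<open>n > 0\<close> by (simp add: distr_component)
  qed simp_all
qed

lemma
  fixes p :: "'a pmf" and g :: "'a \<Rightarrow> real"
  assumes range: "\<And>x. x \<in> set_pmf p \<Longrightarrow> g x \<in> {a..b}" and "a < b" "n > 0" "\<epsilon> \<ge> 0"
  defines "mean xs \<equiv> sum_list (map g xs) / real n"
  shows replicate_pmf_Hoeffding_ge:
      "measure_pmf.prob (replicate_pmf n p) {xs. mean xs \<ge> measure_pmf.expectation p g + \<epsilon>}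
         \<le> exp (- 2 * real n * \<epsilon>\<^sup>2 / (b - a)\<^sup>2)"
    and replicate_pmf_Hoeffding_le:
      "measure_pmf.prob (replicate_pmf n p) {xs. mean xs \<le> measure_pmf.expectation p g - \<epsilon>}
         \<le> exp (- 2 * real n * \<epsilon>\<^sup>2 / (b - a)\<^sup>2)"
    and replicate_pmf_Hoeffding_abs_ge:
      "measure_pmf.prob (replicate_pmf n p) {xs. \<bar>mean xs - measure_pmf.expectation p g\<bar> \<ge> \<epsilon>}
         \<le> 2 * exp (- 2 * real n * \<epsilon>\<^sup>2 / (b - a)\<^sup>2)"
proof -
  define M where "M = Pi_pmf {..<n} undefined (\<lambda>_. p)"
  have "measure_pmf.expectation M (\<lambda>f. g (f 0)) = measure_pmf.expectation (map_pmf (\<lambda>f. f 0) M) g"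
    by simp
  then have expectation: "measure_pmf.expectation M (\<lambda>f. g (f 0)) = measure_pmf.expectation p g"
    using \<open>n > 0\<close> by (simp add: M_def Pi_pmf_component)
  interpret Hoeffding_ineq_iid "measure_pmf M" "{..<n}" "\<lambda>i f. g (f i)" "\<lambda>f. g (f 0)" a b
    "measure_pmf.expectation M (\<lambda>f. g (f 0))"
    using iid_interval_bounded_random_variables_Pi_pmf[OF range \<open>n > 0\<close>, where d = undefined]
    by (simp add: M_def Hoeffding_ineq_iid_def)
  have replicate: "replicate_pmf n p = map_pmf (\<lambda>f. map f [0..<n]) M"
    unfolding M_def by (rule replicate_pmf_eq_map_Pi_pmf)
  have mean_map: "mean (map f [0..<n]) = (\<Sum>i\<in>{..<n}. g (f i)) / card {..<n}" for f
    by (simp add: mean_def sum_set_upt_conv_sum_list_nat[symmetric] atLeast0LessThan o_def)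
  have "{..<n} \<noteq> {}" using \<open>n > 0\<close> by auto
  note Hoeffding = Hoeffding_ineq_ge'[OF \<open>\<epsilon> \<ge> 0\<close> \<open>a < b\<close> this]
    Hoeffding_ineq_le'[OF \<open>\<epsilon> \<ge> 0\<close> \<open>a < b\<close> this] Hoeffding_ineq_abs_ge'[OF \<open>\<epsilon> \<ge> 0\<close> \<open>a < b\<close> this]
  show "measure_pmf.prob (replicate_pmf n p) {xs. mean xs \<ge> measure_pmf.expectation p g + \<epsilon>}
         \<le> exp (- 2 * real n * \<epsilon>\<^sup>2 / (b - a)\<^sup>2)"
    using Hoeffding(1) by (simp add: replicate mean_map vimage_def expectation)
  show "measure_pmf.prob (replicate_pmf n p) {xs. mean xs \<le> measure_pmf.expectation p g - \<epsilon>}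
         \<le> exp (- 2 * real n * \<epsilon>\<^sup>2 / (b - a)\<^sup>2)"
    using Hoeffding(2) by (simp add: replicate mean_map vimage_def expectation)
  show "measure_pmf.prob (replicate_pmf n p) {xs. \<bar>mean xs - measure_pmf.expectation p g\<bar> \<ge> \<epsilon>}
         \<le> 2 * exp (- 2 * real n * \<epsilon>\<^sup>2 / (b - a)\<^sup>2)"
    using Hoeffding(3) by (simp add: replicate mean_map vimage_def expectation)
qed

lemma prob_replicate_pmf_mean_between:
  fixes R :: "'a pmf" and h l u :: "'a \<Rightarrow> real"
  assumes "a < b" "N > 0" "s \<ge> 0"
    and range: "\<And>y. y \<in> set_pmf R \<Longrightarrow> l y \<in> {a..b} \<and> u y \<in> {a..b}"
    and between: "\<And>y. y \<in> set_pmf R \<Longrightarrow> y \<notin> B \<Longrightarrow> l y \<le> h y \<and> h y \<le> u y"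
  shows "1 - 2 * exp (- 2 * real N * s\<^sup>2 / (b - a)\<^sup>2) - N * measure_pmf.prob R B
    \<le> measure_pmf.prob (replicate_pmf N R)
        {ys. measure_pmf.expectation R l - s < sum_list (map h ys) / N \<and>
             sum_list (map h ys) / N < measure_pmf.expectation R u + s}"
    (is "_ \<le> measure_pmf.prob ?R ?between")
proof -
  define low where "low = {ys. sum_list (map l ys) / N \<le> measure_pmf.expectation R l - s}"
  define high where "high = {ys. sum_list (map u ys) / N \<ge> measure_pmf.expectation R u + s}"
  define hit where "hit = {ys. \<exists>y\<in>set ys. y \<in> B}"
  have "measure_pmf.prob ?R low \<le> exp (- 2 * real N * s\<^sup>2 / (b - a)\<^sup>2)"
    unfolding low_def using range assms(1-3) by (intro replicate_pmf_Hoeffding_le) auto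
  moreover have "measure_pmf.prob ?R high \<le> exp (- 2 * real N * s\<^sup>2 / (b - a)\<^sup>2)"
    unfolding high_def using range assms(1-3) by (intro replicate_pmf_Hoeffding_ge) auto
  moreover have "measure_pmf.prob ?R hit \<le> N * measure_pmf.prob R B"
    unfolding hit_def by (rule prob_replicate_pmf_exists_le)
  moreover have "ys \<in> low \<union> high \<union> hit" if "ys \<in> set_pmf ?R" "ys \<notin> ?between" for ys
  proof (rule ccontr)
    assume "ys \<notin> low \<union> high \<union> hit"
    then have "l y \<le> h y \<and> h y \<le> u y" if "y \<in> set ys" for y
      using \<open>ys \<in> set_pmf ?R\<close> that between by (auto simp: hit_def set_replicate_pmf)
    then have "sum_list (map l ys) / N \<le> sum_list (map h ys) / N"
      "sum_list (map h ys) / N \<le> sum_list (map u ys) / N"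
      by (intro divide_right_mono sum_list_mono; simp)+
    then show False
      using \<open>ys \<notin> low \<union> high \<union> hit\<close> \<open>ys \<notin> ?between\<close> by (auto simp: low_def high_def)
  qed
  then have "measure_pmf.prob ?R (UNIV - ?between) \<le> measure_pmf.prob ?R (low \<union> high \<union> hit)"
    by (intro measure_pmf.finite_measure_mono_AE AE_pmfI) auto
  moreover have "measure_pmf.prob ?R (low \<union> high \<union> hit) \<le> measure_pmf.prob ?R (low \<union> high) + measure_pmf.prob ?R hit"
    "measure_pmf.prob ?R (low \<union> high) \<le> measure_pmf.prob ?R low + measure_pmf.prob ?R high"
    by (rule measure_Un_le; simp)+
  moreover have "measure_pmf.prob ?R (UNIV - ?between) = 1 - measure_pmf.prob ?R ?between"
    by (subst measure_pmf.prob_compl[symmetric]) auto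
  ultimately show ?thesis by linarith
qed

lemma expectation_ge_envelope:
  fixes p G l :: "'a \<Rightarrow> real" and q :: "'a pmf"
  assumes "finite S" "set_pmf q \<subseteq> S" "e \<ge> 0"
    and p: "\<And>x. x \<in> S \<Longrightarrow> 0 \<le> p x" "sum p S = 1"
    and l: "\<And>x. x \<in> S \<Longrightarrow> l x \<in> {0..1}"
    and G: "\<And>x. x \<in> S \<Longrightarrow> G x \<le> 1"
    and envelope: "\<And>x. x \<in> S \<Longrightarrow> x \<notin> B \<Longrightarrow> G x - e \<le> l x"
  shows "(\<Sum>x\<in>S. p x * G x) - (\<Sum>x\<in>S. \<bar>p x - pmf q x\<bar>) - e - (\<Sum>x\<in>S \<inter> B. p x)
           \<le> measure_pmf.expectation q l"
proof -
  have pointwise: "p x * G x - \<bar>p x - pmf q x\<bar> - e * p x - (if x \<in> B then p x else 0) \<le> l x * pmf q x"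
    if "x \<in> S" for x
  proof -
    have "p x * (G x - e) - (if x \<in> B then p x else 0) \<le> p x * l x"
    proof (cases "x \<in> B")
      case True
      have "p x * (G x - e - 1) \<le> 0" "0 \<le> p x * l x"
        using p(1)[OF that] l[OF that] G[OF that] \<open>e \<ge> 0\<close> by (simp_all add: mult_nonneg_nonpos)
      then show ?thesis using True by (simp add: algebra_simps)
    next
      case False
      then show ?thesis using p(1)[OF that] envelope[OF that] by (simp add: mult_left_mono)
    qed
    moreover have "\<bar>l x * (pmf q x - p x)\<bar> \<le> \<bar>p x - pmf q x\<bar>"
      using l[OF that] by (simp add: abs_mult abs_minus_commute mult_left_le_one_le)
    ultimately show ?thesis by (simp add: algebra_simps abs_le_iff)
  qed
  have "(\<Sum>x\<in>S. p x * G x) - (\<Sum>x\<in>S. \<bar>p x - pmf q x\<bar>) - e - (\<Sum>x\<in>S \<inter> B. p x) =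
      (\<Sum>x\<in>S. p x * G x - \<bar>p x - pmf q x\<bar> - e * p x - (if x \<in> B then p x else 0))"
    using \<open>finite S\<close> p(2) by (simp add: sum_subtractf sum.inter_restrict flip: sum_distrib_left)
  also have "\<dots> \<le> (\<Sum>x\<in>S. l x * pmf q x)"
    by (intro sum_mono pointwise)
  also have "\<dots> = measure_pmf.expectation q l"
    using assms(1,2) by (intro integral_measure_pmf_real[symmetric]) auto
  finally show ?thesis .
qed

section \<open>Pauli coefficients of pure states\<close>

lemma sum_lists_length_prod:
  fixes F :: "nat \<Rightarrow> 'a::finite \<Rightarrow> 'b::comm_semiring_1"
  shows "(\<Sum>xs\<in>{xs. length xs = n}. \<Prod>i<n. F i (xs ! i)) = (\<Prod>i<n. \<Sum>a\<in>UNIV. F i a)"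
proof (induction n arbitrary: F)
  case 0
  have "{xs::'a list. length xs = 0} = {[]}" by auto
  then show ?case by simp
next
  case (Suc n)
  have lists_Suc: "{xs::'a list. length xs = Suc n} = (\<lambda>(a, xs). a # xs) ` (UNIV \<times> {xs. length xs = n})"
    by (auto simp: length_Suc_conv image_iff)
  have inj: "inj_on (\<lambda>(a, xs). a # xs) (UNIV \<times> {xs::'a list. length xs = n})"
    by (auto simp: inj_on_def)
  have "(\<Sum>xs\<in>{xs::'a list. length xs = Suc n}. \<Prod>i<Suc n. F i (xs ! i))
      = (\<Sum>(a, xs)\<in>UNIV \<times> {xs::'a list. length xs = n}. \<Prod>i<Suc n. F i ((a # xs) ! i))"
    unfolding lists_Suc by (subst sum.reindex[OF inj]) (simp add: case_prod_unfold)
  also have "\<dots> = (\<Sum>a\<in>UNIV. \<Sum>xs\<in>{xs::'a list. length xs = n}. F 0 a * (\<Prod>i<n. F (Suc i) (xs ! i)))"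
    by (subst sum.cartesian_product[symmetric]) (simp only: prod.lessThan_Suc_shift nth_Cons_0 nth_Cons_Suc)
  also have "\<dots> = (\<Sum>a\<in>UNIV. F 0 a * (\<Prod>i<n. \<Sum>b\<in>UNIV. F (Suc i) b))"
    by (simp add: sum_distrib_left[symmetric] Suc.IH[of "\<lambda>i. F (Suc i)"])
  also have "\<dots> = (\<Prod>i<Suc n. \<Sum>a\<in>UNIV. F i a)"
    by (simp only: prod.lessThan_Suc_shift sum_distrib_right)
  finally show ?case .
qed

lemma finite_basis [simp]: "finite (basis n)"
  using finite_lists_length_eq[of "UNIV :: bool set" n] by (simp add: basis_def)

lemma finite_paulis [simp]: "finite (paulis n)"
  using finite_lists_length_eq[of "UNIV :: (bool \<times> bool) set" n] by (simp add: paulis_def)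

lemma tr_opmult: "tr n (opmult n A B) = (\<Sum>r\<in>basis n. \<Sum>k\<in>basis n. A r k * B k r)"
  by (simp add: tr_def opmult_def)

lemma cnj_pauli1: "cnj (pauli1 s a b) = pauli1 s b a"
  by (cases s; cases "fst s"; cases "snd s"; cases a; cases b; auto)

lemma sum_norm_pauli1: "(\<Sum>b\<in>UNIV. cmod (pauli1 s a b)) = 1"
  by (cases s; cases "fst s"; cases "snd s"; cases a; auto simp: UNIV_bool)

(* Completeness of the single-qubit Pauli basis: the sum over s of sigma_s (x) sigma_s is twice the swap. *)
lemma sum_pauli1_mult: "(\<Sum>s\<in>UNIV. pauli1 s a b * pauli1 s c d) = (if a = d \<and> b = c then 2 else 0)"
proof -
  have pairs: "(UNIV :: (bool \<times> bool) set) = {(False, False), (True, False), (False, True), (True, True)}"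
    by auto
  show ?thesis by (cases a; cases b; cases c; cases d; simp add: pairs)
qed

lemma cnj_pauli: "cnj (pauli x k r) = pauli x r k"
  by (simp add: pauli_def cnj_pauli1)

lemma sum_norm_pauli_row:
  assumes "length x = n" "k \<in> basis n"
  shows "(\<Sum>r\<in>basis n. cmod (pauli x k r)) = 1"
proof -
  have "(\<Sum>r\<in>basis n. cmod (pauli x k r)) = (\<Sum>r\<in>{r. length r = n}. \<Prod>i<n. cmod (pauli1 (x ! i) (k ! i) (r ! i)))"
    using assms by (simp add: basis_def pauli_def prod_norm[symmetric])
  also have "\<dots> = (\<Prod>i<n. \<Sum>b\<in>UNIV. cmod (pauli1 (x ! i) (k ! i) b))"
    by (rule sum_lists_length_prod)
  finally show ?thesis by (simp add: sum_norm_pauli1)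
qed

lemma sum_norm_pauli_col:
  assumes "length x = n" "r \<in> basis n"
  shows "(\<Sum>k\<in>basis n. cmod (pauli x k r)) = 1"
proof -
  have "cmod (pauli x k r) = cmod (pauli x r k)" for k
    by (metis cnj_pauli complex_mod_cnj)
  then show ?thesis using sum_norm_pauli_row[OF assms] by simp
qed

lemma sum_pauli_mult:
  assumes "k \<in> basis n" "r \<in> basis n" "k' \<in> basis n" "r' \<in> basis n"
  shows "(\<Sum>x\<in>paulis n. pauli x k r * pauli x k' r') = (if k = r' \<and> r = k' then 2 ^ n else 0)"
proof -
  have "(\<Sum>x\<in>paulis n. pauli x k r * pauli x k' r') =
        (\<Sum>x\<in>{x. length x = n}. \<Prod>i<n. pauli1 (x ! i) (k ! i) (r ! i) * pauli1 (x ! i) (k' ! i) (r' ! i))"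
    by (simp add: paulis_def pauli_def prod.distrib)
  also have "\<dots> = (\<Prod>i<n. \<Sum>s\<in>UNIV. pauli1 s (k ! i) (r ! i) * pauli1 s (k' ! i) (r' ! i))"
    by (rule sum_lists_length_prod)
  also have "\<dots> = (\<Prod>i<n. if k ! i = r' ! i \<and> r ! i = k' ! i then 2 else 0)"
    by (simp add: sum_pauli1_mult)
  also have "\<dots> = (if k = r' \<and> r = k' then 2 ^ n else 0)"
  proof (cases "k = r' \<and> r = k'")
    case False
    then obtain i where "i < n" "\<not> (k ! i = r' ! i \<and> r ! i = k' ! i)"
      using assms by (auto simp: basis_def list_eq_iff_nth_eq)
    then show ?thesis using False by (intro trans[OF prod_zero]) auto
  qed simp
  finally show ?thesis .
qed

lemma sum_tr_opmult_pauli: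
  "(\<Sum>x\<in>paulis n. tr n (opmult n A (pauli x)) * tr n (opmult n B (pauli x))) = 2 ^ n * tr n (opmult n A B)"
proof -
  have "(\<Sum>x\<in>paulis n. tr n (opmult n A (pauli x)) * tr n (opmult n B (pauli x))) =
    (\<Sum>x\<in>paulis n. \<Sum>r\<in>basis n. \<Sum>r'\<in>basis n. \<Sum>k\<in>basis n. \<Sum>k'\<in>basis n.
        A r k * B r' k' * (pauli x k r * pauli x k' r'))"
    by (simp add: tr_opmult sum_product mult_ac)
  also have "\<dots> = (\<Sum>r\<in>basis n. \<Sum>r'\<in>basis n. \<Sum>k\<in>basis n. \<Sum>k'\<in>basis n.
        A r k * B r' k' * (\<Sum>x\<in>paulis n. pauli x k r * pauli x k' r'))"
    by (simp only: sum.swap[of _ "paulis n"] sum_distrib_left)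
  also have "\<dots> = (\<Sum>r\<in>basis n. \<Sum>r'\<in>basis n. \<Sum>k\<in>basis n. \<Sum>k'\<in>basis n.
        (if k' = r then (if k = r' then A r k * B r' k' * 2 ^ n else 0) else 0))"
    by (intro sum.cong refl) (auto simp: sum_pauli_mult)
  also have "\<dots> = 2 ^ n * tr n (opmult n A B)"
    by (simp add: sum.delta tr_opmult sum_distrib_left mult_ac)
  finally show ?thesis .
qed

lemma norm_quadratic_form_le:
  fixes \<psi> :: "'a \<Rightarrow> complex"
  assumes "finite S"
    and row: "\<And>k. k \<in> S \<Longrightarrow> (\<Sum>r\<in>S. cmod (M k r)) \<le> 1"
    and col: "\<And>r. r \<in> S \<Longrightarrow> (\<Sum>k\<in>S. cmod (M k r)) \<le> 1"
  shows "cmod (\<Sum>r\<in>S. \<Sum>k\<in>S. \<psi> r * cnj (\<psi> k) * M k r) \<le> (\<Sum>b\<in>S. (cmod (\<psi> b))\<^sup>2)"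
proof -
  define w where "w b = (cmod (\<psi> b))\<^sup>2" for b
  have amgm: "cmod (\<psi> r * cnj (\<psi> k) * M k r) \<le> (w r * cmod (M k r) + w k * cmod (M k r)) / 2" for r k
  proof -
    have "2 * (cmod (\<psi> r) * cmod (\<psi> k)) \<le> w r + w k"
      using sum_squares_bound[of "cmod (\<psi> r)" "cmod (\<psi> k)"] by (simp add: w_def)
    then have "2 * (cmod (\<psi> r) * cmod (\<psi> k)) * cmod (M k r) \<le> (w r + w k) * cmod (M k r)"
      by (rule mult_right_mono) simp
    then show ?thesis by (simp add: norm_mult algebra_simps)
  qed
  have "cmod (\<Sum>r\<in>S. \<Sum>k\<in>S. \<psi> r * cnj (\<psi> k) * M k r)
      \<le> (\<Sum>r\<in>S. \<Sum>k\<in>S. (w r * cmod (M k r) + w k * cmod (M k r)) / 2)"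
    by (intro order.trans[OF norm_sum] sum_mono order.trans[OF norm_sum] amgm)
  also have "\<dots> = ((\<Sum>r\<in>S. w r * (\<Sum>k\<in>S. cmod (M k r))) + (\<Sum>k\<in>S. w k * (\<Sum>r\<in>S. cmod (M k r)))) / 2"
    by (simp only: sum_divide_distrib[symmetric] sum.distrib sum_distrib_left sum.swap[of "\<lambda>r k. w k * _ k r"])
  also have "\<dots> \<le> ((\<Sum>r\<in>S. w r) + (\<Sum>k\<in>S. w k)) / 2"
    using row col by (intro divide_right_mono add_mono sum_mono mult_left_le) (auto simp: w_def)
  finally show ?thesis by (simp add: w_def)
qed

lemma pure_stateE:
  assumes "pure_state n \<rho>"
  obtains \<psi> where "(\<Sum>b\<in>basis n. (cmod (\<psi> b))\<^sup>2) = 1"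
    and "\<And>A. tr n (opmult n \<rho> A) = (\<Sum>r\<in>basis n. \<Sum>k\<in>basis n. \<psi> r * cnj (\<psi> k) * A k r)"
proof -
  obtain \<psi> where "(\<Sum>b\<in>basis n. (cmod (\<psi> b))\<^sup>2) = 1"
    and "\<And>r c. r \<in> basis n \<Longrightarrow> c \<in> basis n \<Longrightarrow> \<rho> r c = \<psi> r * cnj (\<psi> c)"
    using assms unfolding pure_state_def by blast
  then show thesis by (intro that) (simp_all add: tr_opmult)
qed

lemma abs_alpha_le_1:
  assumes "pure_state n \<rho>" "length x = n"
  shows "\<bar>alpha n \<rho> x\<bar> \<le> 1"
proof -
  obtain \<psi> where norm: "(\<Sum>b\<in>basis n. (cmod (\<psi> b))\<^sup>2) = 1"
    and tr: "\<And>A. tr n (opmult n \<rho> A) = (\<Sum>r\<in>basis n. \<Sum>k\<in>basis n. \<psi> r * cnj (\<psi> k) * A k r)"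
    using pure_stateE[OF assms(1)] by blast
  have "cmod (tr n (opmult n \<rho> (pauli x))) \<le> 1"
    unfolding tr norm[symmetric] using sum_norm_pauli_row sum_norm_pauli_col assms(2)
    by (intro norm_quadratic_form_le) auto
  then show ?thesis
    unfolding alpha_def using abs_Re_le_cmod order.trans by blast
qed

lemma Im_tr_opmult_pauli:
  assumes "pure_state n \<rho>"
  shows "Im (tr n (opmult n \<rho> (pauli x))) = 0"
proof -
  obtain \<psi> where tr: "\<And>A. tr n (opmult n \<rho> A) = (\<Sum>r\<in>basis n. \<Sum>k\<in>basis n. \<psi> r * cnj (\<psi> k) * A k r)"
    using pure_stateE[OF assms] by blast
  have "cnj (tr n (opmult n \<rho> (pauli x))) =
      (\<Sum>r\<in>basis n. \<Sum>k\<in>basis n. cnj (\<psi> r) * \<psi> k * pauli x r k)"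
    unfolding tr by (simp add: cnj_pauli)
  also have "\<dots> = tr n (opmult n \<rho> (pauli x))"
    unfolding tr by (subst sum.swap) (simp add: mult_ac)
  finally have "cnj (tr n (opmult n \<rho> (pauli x))) = tr n (opmult n \<rho> (pauli x))" .
  then have "Im (cnj (tr n (opmult n \<rho> (pauli x)))) = Im (tr n (opmult n \<rho> (pauli x)))"
    by simp
  then show ?thesis by simp
qed

lemma tr_pure_state_square:
  assumes "pure_state n \<rho>"
  shows "tr n (opmult n \<rho> \<rho>) = 1"
proof -
  obtain \<psi> where norm: "(\<Sum>b\<in>basis n. (cmod (\<psi> b))\<^sup>2) = 1"
    and "\<And>r c. r \<in> basis n \<Longrightarrow> c \<in> basis n \<Longrightarrow> \<rho> r c = \<psi> r * cnj (\<psi> c)"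
    using assms unfolding pure_state_def by blast
  then have "tr n (opmult n \<rho> \<rho>) = (\<Sum>r\<in>basis n. \<Sum>k\<in>basis n. (\<psi> r * cnj (\<psi> r)) * (\<psi> k * cnj (\<psi> k)))"
    by (simp add: tr_opmult mult_ac)
  also have "\<dots> = complex_of_real ((\<Sum>b\<in>basis n. (cmod (\<psi> b))\<^sup>2) * (\<Sum>b\<in>basis n. (cmod (\<psi> b))\<^sup>2))"
    by (simp add: complex_norm_square[symmetric] sum_product)
  finally show ?thesis by (simp add: norm)
qed

lemma sum_alpha_mult:
  assumes "pure_state n \<rho>" "pure_state n \<sigma>"
  shows "(\<Sum>x\<in>paulis n. alpha n \<rho> x * alpha n \<sigma> x) = 2 ^ n * Re (tr n (opmult n \<rho> \<sigma>))"
proof -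
  have "(\<Sum>x\<in>paulis n. alpha n \<rho> x * alpha n \<sigma> x) =
      Re (\<Sum>x\<in>paulis n. tr n (opmult n \<rho> (pauli x)) * tr n (opmult n \<sigma> (pauli x)))"
    by (simp add: alpha_def Im_tr_opmult_pauli[OF assms(1)] Im_tr_opmult_pauli[OF assms(2)])
  then show ?thesis by (simp add: sum_tr_opmult_pauli)
qed

lemma sum_alpha_squared:
  assumes "pure_state n \<rho>"
  shows "(\<Sum>x\<in>paulis n. (alpha n \<rho> x)\<^sup>2) = 2 ^ n"
  using sum_alpha_mult[OF assms assms] tr_pure_state_square[OF assms] by (simp add: power2_eq_square)

lemma p_mix_nonneg: "p_mix n \<rho> \<sigma> x \<ge> 0"
  by (simp add: p_mix_def p_dist_def)

lemma p_mix_eq: "p_mix n \<rho> \<sigma> x = ((alpha n \<rho> x)\<^sup>2 + (alpha n \<sigma> x)\<^sup>2) / (2 * 2 ^ n)"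
  by (simp add: p_mix_def p_dist_def field_simps)

lemma sum_p_mix:
  assumes "pure_state n \<rho>" "pure_state n \<sigma>"
  shows "(\<Sum>x\<in>paulis n. p_mix n \<rho> \<sigma> x) = 1"
  by (simp add: p_mix_eq sum_divide_distrib[symmetric] sum.distrib sum_alpha_squared assms)

lemma card_support_alpha_le:
  "real (card {x\<in>paulis n. alpha n \<rho> x \<noteq> 0}) \<le> 2 powr (M0 n \<rho> + n)"
proof -
  define c where "c = real (card {x\<in>paulis n. alpha n \<rho> x \<noteq> 0})"
  have "0 \<le> c" by (simp add: c_def)
  then have "c \<le> 2 powr log 2 c"
    by (cases "c = 0") simp_all
  then show ?thesis by (simp add: M0_def c_def)
qed

lemma sum_p_mix_small_le:
  assumes "\<epsilon> \<ge> 0"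
  shows "(\<Sum>x\<in>{x\<in>paulis n. (alpha n \<rho> x)\<^sup>2 + (alpha n \<sigma> x)\<^sup>2 \<le> \<epsilon> * 2 powr - max (M0 n \<rho>) (M0 n \<sigma>)}.
            p_mix n \<rho> \<sigma> x) \<le> \<epsilon>"
    (is "(\<Sum>x\<in>?small. _) \<le> _")
proof -
  define M where "M = max (M0 n \<rho>) (M0 n \<sigma>)"
  define supp where "supp = {x\<in>paulis n. alpha n \<rho> x \<noteq> 0} \<union> {x\<in>paulis n. alpha n \<sigma> x \<noteq> 0}"
  have "(\<Sum>x\<in>?small. p_mix n \<rho> \<sigma> x) = (\<Sum>x\<in>?small \<inter> supp. p_mix n \<rho> \<sigma> x)"
    by (intro sum.mono_neutral_right) (auto simp: supp_def p_mix_eq)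
  also have "\<dots> \<le> (\<Sum>x\<in>?small \<inter> supp. \<epsilon> * 2 powr - M / (2 * 2 ^ n))"
    by (intro sum_mono) (auto simp: p_mix_eq M_def divide_right_mono)
  also have "\<dots> = real (card (?small \<inter> supp)) * (\<epsilon> * 2 powr - M / (2 * 2 ^ n))"
    by simp
  also have "\<dots> \<le> real (card supp) * (\<epsilon> * 2 powr - M / (2 * 2 ^ n))"
    using assms by (intro mult_right_mono) (simp_all add: card_mono supp_def)
  also have "\<dots> \<le> (2 powr (M + n) + 2 powr (M + n)) * (\<epsilon> * 2 powr - M / (2 * 2 ^ n))"
  proof (intro mult_right_mono)
    have "real (card supp) \<le> real (card {x\<in>paulis n. alpha n \<rho> x \<noteq> 0}) + real (card {x\<in>paulis n. alpha n \<sigma> x \<noteq> 0})"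
      unfolding supp_def using card_Un_le of_nat_mono by fastforce
    also have "\<dots> \<le> 2 powr (M + n) + 2 powr (M + n)"
    proof -
      have "2 powr (M0 n \<rho> + n) \<le> 2 powr (M + n)" "2 powr (M0 n \<sigma> + n) \<le> 2 powr (M + n)"
        by (simp_all add: M_def)
      then show ?thesis using card_support_alpha_le[of n \<rho>] card_support_alpha_le[of n \<sigma>] by linarith
    qed
    finally show "real (card supp) \<le> 2 powr (M + n) + 2 powr (M + n)" .
  qed (use assms in simp)
  also have "\<dots> = \<epsilon>"
    by (simp add: powr_add powr_minus powr_realpow field_simps)
  finally show ?thesis by (simp add: M_def)
qed

section \<open>The function G\<close>

lemma Gfun_bounds:
  assumes "0 \<le> g0" "g0 \<le> 1"
  shows "Gfun g0 u v \<in> {0..1}"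
proof (cases "u = 0 \<and> v = 0")
  case False
  then have "u\<^sup>2 + v\<^sup>2 > 0" by (simp add: sum_power2_gt_zero_iff)
  moreover have "(u + v)\<^sup>2 \<le> 2 * (u\<^sup>2 + v\<^sup>2)"
    using sum_squares_bound[of u v] by (simp add: power2_sum)
  ultimately show ?thesis using False assms by (simp add: Gfun_def field_simps)
qed (use assms in \<open>simp add: Gfun_def\<close>)

lemma Gfun_eq:
  assumes "u\<^sup>2 + v\<^sup>2 > 0"
  shows "Gfun g0 u v = 1/2 + u * v / (u\<^sup>2 + v\<^sup>2)"
proof -
  have "u\<^sup>2 + v\<^sup>2 \<noteq> 0" using assms by linarith
  have "\<not> (u = 0 \<and> v = 0)" using assms by auto
  then have "Gfun g0 u v = (1/2) * (u + v)\<^sup>2 / (u\<^sup>2 + v\<^sup>2)"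
    by (simp only: Gfun_def if_False simp_thms)
  also have "\<dots> = 1/2 + u * v / (u\<^sup>2 + v\<^sup>2)"
    using \<open>u\<^sup>2 + v\<^sup>2 \<noteq> 0\<close> by (simp add: power2_sum field_simps)
  finally show ?thesis .
qed

lemma sum_p_mix_Gfun:
  assumes "pure_state n \<rho>" "pure_state n \<sigma>"
  shows "(\<Sum>x\<in>paulis n. p_mix n \<rho> \<sigma> x * Gfun g0 (alpha n \<rho> x) (alpha n \<sigma> x))
          = (1 + Re (tr n (opmult n \<rho> \<sigma>))) / 2"
proof -
  have summand: "p_mix n \<rho> \<sigma> x * Gfun g0 a b = ((a\<^sup>2 + b\<^sup>2) / 2 + a * b) / (2 * 2 ^ n)"
    if "a = alpha n \<rho> x" "b = alpha n \<sigma> x" for x a b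
  proof (cases "a = 0 \<and> b = 0")
    case False
    then have pos: "a\<^sup>2 + b\<^sup>2 > 0" by (simp add: sum_power2_gt_zero_iff)
    have cancel: "s / N * (1/2 + p / s) = (s / 2 + p) / N" if "s \<noteq> 0" for s p N :: real
      using that by (simp add: distrib_left add_divide_distrib)
    show ?thesis
      unfolding that(1,2)[symmetric] p_mix_eq Gfun_eq[OF pos] using pos by (intro cancel) linarith
  qed (simp add: that p_mix_eq)
  have "(\<Sum>x\<in>paulis n. p_mix n \<rho> \<sigma> x * Gfun g0 (alpha n \<rho> x) (alpha n \<sigma> x)) =
    ((\<Sum>x\<in>paulis n. (alpha n \<rho> x)\<^sup>2) / 2 + (\<Sum>x\<in>paulis n. (alpha n \<sigma> x)\<^sup>2) / 2
      + (\<Sum>x\<in>paulis n. alpha n \<rho> x * alpha n \<sigma> x)) / (2 * 2 ^ n)"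
    by (simp add: summand sum_divide_distrib[symmetric] sum.distrib)
  also have "\<dots> = (1 + Re (tr n (opmult n \<rho> \<sigma>))) / 2"
    by (simp add: sum_alpha_squared sum_alpha_mult assms field_simps)
  finally show ?thesis .
qed

lemma Gfun_diff_squared_le:
  assumes uv: "u\<^sup>2 + v\<^sup>2 > 0" and ab: "a\<^sup>2 + b\<^sup>2 > 0"
    and "\<bar>u - a\<bar> \<le> t" and "\<bar>v - b\<bar> \<le> t"
  shows "(Gfun g0 u v - Gfun g0 a b)\<^sup>2 * (a\<^sup>2 + b\<^sup>2) \<le> 2 * t\<^sup>2"
proof -
  define U where "U = u\<^sup>2 + v\<^sup>2"
  define A where "A = a\<^sup>2 + b\<^sup>2"
  have "U > 0" "A > 0" using uv ab by (simp_all add: U_def A_def)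
  have diff: "Gfun g0 u v - Gfun g0 a b = (u * a - v * b) * (v * a - u * b) / (U * A)"
  proof -
    have "Gfun g0 u v - Gfun g0 a b = u * v / U - a * b / A"
      unfolding Gfun_eq[OF uv] Gfun_eq[OF ab] U_def A_def by simp
    also have "\<dots> = (u * v * A - a * b * U) / (U * A)"
      using \<open>U > 0\<close> \<open>A > 0\<close> by (simp add: diff_frac_eq)
    also have "u * v * A - a * b * U = (u * a - v * b) * (v * a - u * b)"
      by (simp add: U_def A_def power2_eq_square algebra_simps)
    finally show ?thesis .
  qed
  \<comment> \<open>Both bounds are Lagrange's identity; in the second, \<open>v a - u b = v (a - u) + u (v - b)\<close>.\<close>
  have first: "(u * a - v * b)\<^sup>2 \<le> U * A"
  proof -
    have "(u * a - v * b)\<^sup>2 + (u * b + v * a)\<^sup>2 = U * A"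
      by (simp add: U_def A_def power2_eq_square algebra_simps)
    moreover have "0 \<le> (u * b + v * a)\<^sup>2" by simp
    ultimately show ?thesis by linarith
  qed
  have second: "(v * a - u * b)\<^sup>2 \<le> 2 * t\<^sup>2 * U"
  proof -
    have "(a - u)\<^sup>2 \<le> t\<^sup>2" "(v - b)\<^sup>2 \<le> t\<^sup>2"
      using assms(3,4) by (simp_all add: abs_le_square_iff[symmetric] abs_minus_commute)
    then have "((a - u)\<^sup>2 + (v - b)\<^sup>2) * U \<le> 2 * t\<^sup>2 * U"
      using \<open>U > 0\<close> by (intro mult_right_mono) auto
    moreover have "(v * a - u * b)\<^sup>2 + ((a - u) * u - v * (v - b))\<^sup>2 = ((a - u)\<^sup>2 + (v - b)\<^sup>2) * U"
      by (simp add: U_def power2_eq_square algebra_simps)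
    moreover have "0 \<le> ((a - u) * u - v * (v - b))\<^sup>2" by simp
    ultimately show ?thesis by linarith
  qed
  have "(Gfun g0 u v - Gfun g0 a b)\<^sup>2 * A = (u * a - v * b)\<^sup>2 * (v * a - u * b)\<^sup>2 / (U\<^sup>2 * A)"
    using \<open>U > 0\<close> \<open>A > 0\<close> by (simp add: diff power_mult_distrib power2_eq_square field_simps)
  also have "\<dots> \<le> (U * A) * (2 * t\<^sup>2 * U) / (U\<^sup>2 * A)"
    using first second \<open>U > 0\<close> \<open>A > 0\<close> by (intro divide_right_mono mult_mono) auto
  also have "\<dots> = 2 * t\<^sup>2"
    using \<open>U > 0\<close> \<open>A > 0\<close> by (simp add: power2_eq_square field_simps)
  finally show ?thesis by (simp add: A_def)
qed

lemma abs_Gfun_diff_le: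
  assumes "0 \<le> g0" "g0 \<le> 1" "\<epsilon> \<ge> 0"
    and du: "\<bar>u - a\<bar> < t" and dv: "\<bar>v - b\<bar> < t"
    and t: "t\<^sup>2 \<le> \<epsilon>\<^sup>2 * (a\<^sup>2 + b\<^sup>2)"
  shows "\<bar>Gfun g0 u v - Gfun g0 a b\<bar> \<le> 2 * \<epsilon>"
proof (cases "2 * \<epsilon> < 1")
  case False
  have "Gfun g0 u v \<in> {0..1}" "Gfun g0 a b \<in> {0..1}"
    using Gfun_bounds[OF assms(1,2)] by blast+
  then show ?thesis using False by (auto simp: abs_le_iff)
next
  case True
  have "t > 0" using du by linarith
  then have "0 < t\<^sup>2" by simp
  then have "0 < \<epsilon>\<^sup>2 * (a\<^sup>2 + b\<^sup>2)" using t by linarith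
  then have ab: "a\<^sup>2 + b\<^sup>2 > 0" using zero_le_power2[of \<epsilon>] by (auto simp: zero_less_mult_iff)
  have "\<epsilon>\<^sup>2 < (1/2)\<^sup>2" using True \<open>\<epsilon> \<ge> 0\<close> by (intro power_strict_mono) auto
  then have "(2 * \<epsilon>\<^sup>2) * (a\<^sup>2 + b\<^sup>2) < 1 * (a\<^sup>2 + b\<^sup>2)"
    using ab by (intro mult_strict_right_mono) (auto simp: power2_eq_square)
  then have "2 * t\<^sup>2 < a\<^sup>2 + b\<^sup>2" using t by (simp add: mult.assoc)
  \<comment> \<open>hence \<open>(u, v) \<noteq> (0, 0)\<close>, where \<open>Gfun\<close> jumps to the arbitrary value \<open>g0\<close>\<close>
  have uv: "u\<^sup>2 + v\<^sup>2 > 0"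
  proof (rule ccontr)
    assume "\<not> u\<^sup>2 + v\<^sup>2 > 0"
    then have "u = 0" "v = 0" by (auto simp: not_less sum_power2_le_zero_iff)
    then have "a\<^sup>2 < t\<^sup>2" "b\<^sup>2 < t\<^sup>2"
      using du dv \<open>t > 0\<close> power2_strict_mono[of a t] power2_strict_mono[of b t] by simp_all
    then show False using \<open>2 * t\<^sup>2 < a\<^sup>2 + b\<^sup>2\<close> by linarith
  qed
  have "(Gfun g0 u v - Gfun g0 a b)\<^sup>2 * (a\<^sup>2 + b\<^sup>2) \<le> (4 * \<epsilon>\<^sup>2) * (a\<^sup>2 + b\<^sup>2)"
    using Gfun_diff_squared_le[OF uv ab, of t g0] du dv t \<open>0 < \<epsilon>\<^sup>2 * (a\<^sup>2 + b\<^sup>2)\<close> by simp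
  then have "(Gfun g0 u v - Gfun g0 a b)\<^sup>2 \<le> (2 * \<epsilon>)\<^sup>2"
    using ab by (simp add: power_mult_distrib)
  then show ?thesis using \<open>\<epsilon> \<ge> 0\<close> by (intro power2_le_iff_abs_le[THEN iffD1]) auto
qed

(* Bounds on the value of a round whose estimates are accurate: above the threshold tau the estimate
   of G is within e of the exact value, below it nothing better than [0, 1] is known. *)
definition Gfun_lower :: "real \<Rightarrow> real \<Rightarrow> real \<Rightarrow> real \<Rightarrow> real \<Rightarrow> real" where
  "Gfun_lower g0 \<tau> e a b = (if \<tau> < a\<^sup>2 + b\<^sup>2 then max 0 (Gfun g0 a b - e) else 0)"

definition Gfun_upper :: "real \<Rightarrow> real \<Rightarrow> real \<Rightarrow> real \<Rightarrow> real \<Rightarrow> real" where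
  "Gfun_upper g0 \<tau> e a b = (if \<tau> < a\<^sup>2 + b\<^sup>2 then min 1 (Gfun g0 a b + e) else 1)"

lemma Gfun_lower_upper_bounds:
  assumes "0 \<le> g0" "g0 \<le> 1" "e \<ge> 0"
  shows "Gfun_lower g0 \<tau> e a b \<in> {0..1}" and "Gfun_upper g0 \<tau> e a b \<in> {0..1}"
  using Gfun_bounds[OF assms(1,2), of a b] assms(3) by (auto simp: Gfun_lower_def Gfun_upper_def)

lemma Gfun_lower_le_Gfun_le_upper:
  assumes "0 \<le> g0" "g0 \<le> 1" "\<epsilon> \<ge> 0"
    and "\<bar>u - a\<bar> < t" "\<bar>v - b\<bar> < t" "t\<^sup>2 \<le> \<epsilon>\<^sup>2 * \<tau>"
  shows "Gfun_lower g0 \<tau> (2 * \<epsilon>) a b \<le> Gfun g0 u v \<and> Gfun g0 u v \<le> Gfun_upper g0 \<tau> (2 * \<epsilon>) a b"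
proof (cases "\<tau> < a\<^sup>2 + b\<^sup>2")
  case True
  then have "\<epsilon>\<^sup>2 * \<tau> \<le> \<epsilon>\<^sup>2 * (a\<^sup>2 + b\<^sup>2)" by (simp add: mult_left_mono)
  then have "\<bar>Gfun g0 u v - Gfun g0 a b\<bar> \<le> 2 * \<epsilon>"
    using assms by (intro abs_Gfun_diff_le) auto
  then show ?thesis
    using True Gfun_bounds[OF assms(1,2), of u v] by (auto simp: Gfun_lower_def Gfun_upper_def)
qed (use Gfun_bounds[OF assms(1,2), of u v] in \<open>simp add: Gfun_lower_def Gfun_upper_def\<close>)

lemma expectation_Gfun_envelopes:
  assumes "pure_state n \<rho>" "pure_state n \<sigma>" "0 \<le> g0" "g0 \<le> 1" "set_pmf q \<subseteq> paulis n"
    and "\<epsilon> \<ge> 0" "e \<ge> 0"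
  defines "\<tau> \<equiv> \<epsilon> * 2 powr - max (M0 n \<rho>) (M0 n \<sigma>)"
  shows "(1 + Re (tr n (opmult n \<rho> \<sigma>))) / 2 - 2 * tv_dist n (p_mix n \<rho> \<sigma>) q - e - \<epsilon>
           \<le> measure_pmf.expectation q (\<lambda>x. Gfun_lower g0 \<tau> e (alpha n \<rho> x) (alpha n \<sigma> x))"
    and "measure_pmf.expectation q (\<lambda>x. Gfun_upper g0 \<tau> e (alpha n \<rho> x) (alpha n \<sigma> x))
           \<le> (1 + Re (tr n (opmult n \<rho> \<sigma>))) / 2 + 2 * tv_dist n (p_mix n \<rho> \<sigma>) q + e + \<epsilon>"
proof -
  let ?p = "p_mix n \<rho> \<sigma>" and ?B = "{x. (alpha n \<rho> x)\<^sup>2 + (alpha n \<sigma> x)\<^sup>2 \<le> \<tau>}"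
  let ?G = "\<lambda>x. Gfun g0 (alpha n \<rho> x) (alpha n \<sigma> x)"
    and ?lower = "\<lambda>x. Gfun_lower g0 \<tau> e (alpha n \<rho> x) (alpha n \<sigma> x)"
    and ?upper = "\<lambda>x. Gfun_upper g0 \<tau> e (alpha n \<rho> x) (alpha n \<sigma> x)"
  have bounds: "0 \<le> ?G x" "?G x \<le> 1" "0 \<le> ?lower x" "?lower x \<le> 1" "0 \<le> ?upper x" "?upper x \<le> 1" for x
    using Gfun_bounds Gfun_lower_upper_bounds assms(3,4,7) by (meson atLeastAtMost_iff)+
  have envelope: "?G x - e \<le> ?lower x" "?upper x \<le> ?G x + e"
    if "\<not> (alpha n \<rho> x)\<^sup>2 + (alpha n \<sigma> x)\<^sup>2 \<le> \<tau>" for x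
    using that by (auto simp: Gfun_lower_def Gfun_upper_def)
  have F: "(\<Sum>x\<in>paulis n. ?p x * ?G x) = (1 + Re (tr n (opmult n \<rho> \<sigma>))) / 2"
    using assms(1,2) by (rule sum_p_mix_Gfun)
  have tv: "(\<Sum>x\<in>paulis n. \<bar>?p x - pmf q x\<bar>) = 2 * tv_dist n ?p q"
    by (simp add: tv_dist_def)
  have small: "(\<Sum>x\<in>paulis n \<inter> ?B. ?p x) \<le> \<epsilon>"
    using sum_p_mix_small_le[OF \<open>\<epsilon> \<ge> 0\<close>, of n \<rho> \<sigma>] by (simp add: \<tau>_def Int_def conj_commute)
  note expectation_ge = expectation_ge_envelope[OF finite_paulis assms(5) \<open>e \<ge> 0\<close> p_mix_nonneg sum_p_mix[OF assms(1,2)]]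
  have "(\<Sum>x\<in>paulis n. ?p x * ?G x) - (\<Sum>x\<in>paulis n. \<bar>?p x - pmf q x\<bar>) - e - (\<Sum>x\<in>paulis n \<inter> ?B. ?p x)
      \<le> measure_pmf.expectation q ?lower"
    by (intro expectation_ge) (auto simp: bounds dest: envelope)
  then show "(1 + Re (tr n (opmult n \<rho> \<sigma>))) / 2 - 2 * tv_dist n ?p q - e - \<epsilon>
           \<le> measure_pmf.expectation q (\<lambda>x. Gfun_lower g0 \<tau> e (alpha n \<rho> x) (alpha n \<sigma> x))"
    using F tv small by linarith
  \<comment> \<open>the upper envelope is the lower envelope of \<open>1 - G\<close>\<close>
  have "(\<Sum>x\<in>paulis n. ?p x * (1 - ?G x)) - (\<Sum>x\<in>paulis n. \<bar>?p x - pmf q x\<bar>) - e - (\<Sum>x\<in>paulis n \<inter> ?B. ?p x)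
      \<le> measure_pmf.expectation q (\<lambda>x. 1 - ?upper x)"
    by (intro expectation_ge) (auto simp: bounds dest: envelope)
  moreover have "(\<Sum>x\<in>paulis n. ?p x * (1 - ?G x)) = 1 - (1 + Re (tr n (opmult n \<rho> \<sigma>))) / 2"
    using F sum_p_mix[OF assms(1,2)] by (simp add: right_diff_distrib sum_subtractf)
  moreover have "measure_pmf.expectation q (\<lambda>x. 1 - ?upper x) = 1 - measure_pmf.expectation q ?upper"
    using finite_subset[OF assms(5) finite_paulis]
    by (subst Bochner_Integration.integral_diff) (simp_all add: integrable_measure_pmf_finite)
  ultimately show "measure_pmf.expectation q (\<lambda>x. Gfun_upper g0 \<tau> e (alpha n \<rho> x) (alpha n \<sigma> x))
           \<le> (1 + Re (tr n (opmult n \<rho> \<sigma>))) / 2 + 2 * tv_dist n ?p q + e + \<epsilon>"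
    using tv small by linarith
qed

section \<open>The symmetric protocol\<close>

definition round_estimates ::
  "nat \<Rightarrow> op \<Rightarrow> op \<Rightarrow> (bool \<times> bool) list pmf \<Rightarrow> nat \<Rightarrow> ((bool \<times> bool) list \<times> real \<times> real) pmf" where
  "round_estimates n \<rho> \<sigma> q N2 =
     bind_pmf q (\<lambda>x. map_pmf (\<lambda>(u, v). (x, u, v)) (pair_pmf (emp_mean n \<rho> x N2) (emp_mean n \<sigma> x N2)))"

lemma sym_protocol_eq_replicate_round_estimates:
  "sym_protocol n \<rho> \<sigma> q N1 N2 g0 =
     map_pmf (\<lambda>ys. sum_list (map (\<lambda>(x, u, v). Gfun g0 u v) ys) / real N1)
       (replicate_pmf N1 (round_estimates n \<rho> \<sigma> q N2))"
proof -
  have round: "protocol_round n \<rho> \<sigma> q N2 g0 = map_pmf (\<lambda>(x, u, v). Gfun g0 u v) (round_estimates n \<rho> \<sigma> q N2)"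
    unfolding protocol_round_def round_estimates_def
    by (simp add: map_bind_pmf pmf.map_comp o_def pair_pmf_def case_prod_unfold)
  show ?thesis
    unfolding sym_protocol_def round replicate_pmf_map_pmf by (simp add: pmf.map_comp o_def)
qed

lemma map_fst_round_estimates: "map_pmf fst (round_estimates n \<rho> \<sigma> q N2) = q"
  unfolding round_estimates_def
  by (simp add: map_bind_pmf pmf.map_comp o_def case_prod_unfold bind_return_pmf')

lemma emp_mean_deviation:
  assumes "\<bar>alpha n \<rho> x\<bar> \<le> 1" "N2 > 0" "t \<ge> 0"
  shows "measure_pmf.prob (emp_mean n \<rho> x N2) {u. t \<le> \<bar>u - alpha n \<rho> x\<bar>} \<le> 2 * exp (- real N2 * t\<^sup>2 / 2)"
proof -
  have "measure_pmf.expectation (meas_outcome n \<rho> x) (\<lambda>y. y) = alpha n \<rho> x"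
    using assms(1) by (simp add: meas_outcome_def field_simps)
  moreover have "y \<in> {-1..1}" if "y \<in> set_pmf (meas_outcome n \<rho> x)" for y
    using that by (auto simp: meas_outcome_def)
  ultimately have "measure_pmf.prob (replicate_pmf N2 (meas_outcome n \<rho> x))
      {ys. t \<le> \<bar>sum_list ys / N2 - alpha n \<rho> x\<bar>} \<le> 2 * exp (- 2 * real N2 * t\<^sup>2 / (1 - - 1)\<^sup>2)"
    using replicate_pmf_Hoeffding_abs_ge[of "meas_outcome n \<rho> x" "\<lambda>y. y" "-1" 1 N2 t] assms(2,3) by simp
  then show ?thesis
    by (simp add: emp_mean_def vimage_def power2_eq_square mult_ac)
qed

lemma round_estimates_deviation:
  assumes "pure_state n \<rho>" "pure_state n \<sigma>" "set_pmf q \<subseteq> paulis n" "N2 > 0" "t \<ge> 0"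
  shows "measure_pmf.prob (round_estimates n \<rho> \<sigma> q N2)
           {(x, u, v). t \<le> \<bar>u - alpha n \<rho> x\<bar> \<or> t \<le> \<bar>v - alpha n \<sigma> x\<bar>} \<le> 4 * exp (- real N2 * t\<^sup>2 / 2)"
  unfolding round_estimates_def
proof (rule prob_bind_pmf_le)
  fix x assume "x \<in> set_pmf q"
  then have "length x = n" using assms(3) by (auto simp: paulis_def)
  let ?P = "pair_pmf (emp_mean n \<rho> x N2) (emp_mean n \<sigma> x N2)"
  have "measure_pmf.prob (map_pmf (\<lambda>(u, v). (x, u, v)) ?P)
           {(x, u, v). t \<le> \<bar>u - alpha n \<rho> x\<bar> \<or> t \<le> \<bar>v - alpha n \<sigma> x\<bar>} =
        measure_pmf.prob ?P (fst -` {u. t \<le> \<bar>u - alpha n \<rho> x\<bar>} \<union> snd -` {v. t \<le> \<bar>v - alpha n \<sigma> x\<bar>})"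
    by (simp add: vimage_def case_prod_unfold Un_def)
  also have "\<dots> \<le> measure_pmf.prob (map_pmf fst ?P) {u. t \<le> \<bar>u - alpha n \<rho> x\<bar>} +
                  measure_pmf.prob (map_pmf snd ?P) {v. t \<le> \<bar>v - alpha n \<sigma> x\<bar>}"
    by (simp add: measure_Un_le)
  also have "\<dots> \<le> 2 * exp (- real N2 * t\<^sup>2 / 2) + 2 * exp (- real N2 * t\<^sup>2 / 2)"
    unfolding map_fst_pair_pmf map_snd_pair_pmf using assms \<open>length x = n\<close>
    by (intro add_mono emp_mean_deviation abs_alpha_le_1)
  finally show "measure_pmf.prob (map_pmf (\<lambda>(u, v). (x, u, v)) ?P)
           {(x, u, v). t \<le> \<bar>u - alpha n \<rho> x\<bar> \<or> t \<le> \<bar>v - alpha n \<sigma> x\<bar>} \<le> 4 * exp (- real N2 * t\<^sup>2 / 2)"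
    by simp
qed

lemma prob_sym_protocol_close:
  assumes \<rho>: "pure_state n \<rho>" and \<sigma>: "pure_state n \<sigma>" and g0: "0 \<le> g0" "g0 \<le> 1"
    and q: "set_pmf q \<subseteq> paulis n" and "\<epsilon> > 0" "N1 > 0" "N2 > 0" "t \<ge> 0"
    and t: "t\<^sup>2 \<le> \<epsilon> ^ 3 * 2 powr - max (M0 n \<rho>) (M0 n \<sigma>)"
  shows "1 - 2 * exp (- 2 * real N1 * \<epsilon>\<^sup>2) - 4 * real N1 * exp (- real N2 * t\<^sup>2 / 2)
    \<le> measure_pmf.prob (sym_protocol n \<rho> \<sigma> q N1 N2 g0)
        {v. \<bar>v - (1 + Re (tr n (opmult n \<rho> \<sigma>))) / 2\<bar> \<le> 4 * \<epsilon> + 2 * tv_dist n (p_mix n \<rho> \<sigma>) q}"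
proof -
  define \<tau> where "\<tau> = \<epsilon> * 2 powr - max (M0 n \<rho>) (M0 n \<sigma>)"
  let ?lower = "\<lambda>x. Gfun_lower g0 \<tau> (2 * \<epsilon>) (alpha n \<rho> x) (alpha n \<sigma> x)"
    and ?upper = "\<lambda>x. Gfun_upper g0 \<tau> (2 * \<epsilon>) (alpha n \<rho> x) (alpha n \<sigma> x)"
    and ?F = "(1 + Re (tr n (opmult n \<rho> \<sigma>))) / 2" and ?TV = "tv_dist n (p_mix n \<rho> \<sigma>) q"
  define h where "h = (\<lambda>(x :: (bool \<times> bool) list, u, v). Gfun g0 u v)"
  define B where "B = {(x, u, v). t \<le> \<bar>u - alpha n \<rho> x\<bar> \<or> t \<le> \<bar>v - alpha n \<sigma> x\<bar>}"
  define R where "R = round_estimates n \<rho> \<sigma> q N2"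
  define between where "between = {ys. measure_pmf.expectation R (\<lambda>y. ?lower (fst y)) - \<epsilon> < sum_list (map h ys) / N1 \<and>
    sum_list (map h ys) / N1 < measure_pmf.expectation R (\<lambda>y. ?upper (fst y)) + \<epsilon>}"
  have "t\<^sup>2 \<le> \<epsilon>\<^sup>2 * \<tau>"
    using t by (simp add: \<tau>_def power3_eq_cube power2_eq_square mult_ac)
  then have "?lower x \<le> Gfun g0 u v \<and> Gfun g0 u v \<le> ?upper x"
    if "\<bar>u - alpha n \<rho> x\<bar> < t" "\<bar>v - alpha n \<sigma> x\<bar> < t" for x u v
    using g0 \<open>\<epsilon> > 0\<close> that by (intro Gfun_lower_le_Gfun_le_upper) auto
  then have "?lower (fst y) \<le> h y \<and> h y \<le> ?upper (fst y)" if "y \<notin> B" for y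
    using that by (cases y) (auto simp: h_def B_def not_le)
  then have "1 - 2 * exp (- 2 * real N1 * \<epsilon>\<^sup>2 / (1 - 0)\<^sup>2) - N1 * measure_pmf.prob R B
      \<le> measure_pmf.prob (replicate_pmf N1 R) between"
    unfolding between_def using \<open>N1 > 0\<close> \<open>\<epsilon> > 0\<close> Gfun_lower_upper_bounds[OF g0]
    by (intro prob_replicate_pmf_mean_between) auto
  moreover have "real N1 * measure_pmf.prob R B \<le> 4 * real N1 * exp (- real N2 * t\<^sup>2 / 2)"
    using mult_left_mono[OF round_estimates_deviation[OF \<rho> \<sigma> q \<open>N2 > 0\<close> \<open>t \<ge> 0\<close>], of "real N1"]
    by (simp add: R_def B_def mult_ac)
  moreover have "measure_pmf.prob (replicate_pmf N1 R) between
      \<le> measure_pmf.prob (sym_protocol n \<rho> \<sigma> q N1 N2 g0) {v. \<bar>v - ?F\<bar> \<le> 4 * \<epsilon> + 2 * ?TV}"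
  proof -
    have E: "measure_pmf.expectation R (\<lambda>y. f (fst y)) = measure_pmf.expectation q f" for f :: "_ \<Rightarrow> real"
      using map_fst_round_estimates[of n \<rho> \<sigma> q N2] by (metis R_def integral_map_pmf)
    have "?F - 2 * ?TV - 3 * \<epsilon> \<le> measure_pmf.expectation R (\<lambda>y. ?lower (fst y))"
      "measure_pmf.expectation R (\<lambda>y. ?upper (fst y)) \<le> ?F + 2 * ?TV + 3 * \<epsilon>"
      using expectation_Gfun_envelopes[OF \<rho> \<sigma> g0 q, of \<epsilon> "2 * \<epsilon>"] \<open>\<epsilon> > 0\<close>
      unfolding E[of ?lower] E[of ?upper] by (simp_all add: \<tau>_def)
    then show ?thesis
      unfolding sym_protocol_eq_replicate_round_estimates R_def[symmetric] h_def[symmetric]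
      by (auto intro!: measure_pmf.finite_measure_mono simp: between_def abs_le_iff)
  qed
  ultimately show ?thesis by simp
qed

lemma exp_neg_le_inverse_if_log2_le:
  fixes x y :: real
  assumes "1 \<le> y" "log 2 y \<le> x"
  shows "exp (- x) \<le> 1 / y"
proof -
  have "ln y * ln 2 \<le> ln y"
    using assms(1) ln_2_less_1 by (intro mult_left_le) auto
  then have "ln y \<le> ln y / ln 2"
    by (simp add: le_divide_eq)
  then have "ln y \<le> x"
    using assms(2) by (simp add: log_def)
  then have "exp (- x) \<le> exp (- ln y)"
    by simp
  then show ?thesis
    using assms(1) by (simp add: exp_minus inverse_eq_divide)
qed

lemma min_power2_le_mult:
  fixes a b :: real
  assumes "0 \<le> a" "0 \<le> b"
  shows "min (a\<^sup>2) (b\<^sup>2) \<le> a * b"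
proof (cases "a \<le> b")
  case True
  then have "a * a \<le> a * b" using assms by (intro mult_left_mono)
  then show ?thesis by (simp add: power2_eq_square min_le_iff_disj)
next
  case False
  then have "b * b \<le> a * b" using assms by (intro mult_right_mono) auto
  then show ?thesis by (simp add: power2_eq_square min_le_iff_disj)
qed

lemma exp_bound_of_N1_sample_size:
  fixes \<epsilon> \<delta> :: real
  assumes "\<epsilon> > 0" "0 < \<delta>" "\<delta> < 1" "real N1 \<ge> 1 / (2 * \<epsilon>\<^sup>2) * log 2 (8 / \<delta>)"
  shows "N1 > 0" and "2 * exp (- 2 * real N1 * \<epsilon>\<^sup>2) \<le> \<delta> / 4"
proof -
  have "0 < log 2 (8 / \<delta>)" using assms(2,3) by simp
  then have "0 < 1 / (2 * \<epsilon>\<^sup>2) * log 2 (8 / \<delta>)" using assms(1) by simp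
  then show "N1 > 0" using assms(4) by simp
  have "log 2 (8 / \<delta>) \<le> 2 * real N1 * \<epsilon>\<^sup>2"
    using assms(1,4) by (simp add: field_simps)
  then have "exp (- (2 * real N1 * \<epsilon>\<^sup>2)) \<le> 1 / (8 / \<delta>)"
    using assms(2,3) by (intro exp_neg_le_inverse_if_log2_le) simp_all
  then show "2 * exp (- 2 * real N1 * \<epsilon>\<^sup>2) \<le> \<delta> / 4"
    by simp
qed

lemma exp_bound_of_N2_sample_size:
  fixes \<delta> m :: real
  assumes "0 < \<delta>" "\<delta> < 1" "N1 > 0" "m > 0" "real N2 \<ge> 2 / m * log 2 (8 * real N1 / \<delta>)"
  shows "N2 > 0" and "4 * real N1 * exp (- real N2 * m / 2) \<le> \<delta> / 2"
proof -
  have log_le: "log 2 (8 * real N1 / \<delta>) \<le> real N2 * m / 2"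
    using assms(4,5) by (simp add: field_simps)
  have "1 < 8 * real N1 / \<delta>"
    using assms(1-3) by (simp add: field_simps)
  then have "0 < log 2 (8 * real N1 / \<delta>)"
    by simp
  then have "0 < real N2 * m"
    using log_le by linarith
  then show "N2 > 0"
    using assms(4) by (simp add: zero_less_mult_iff)
  have "exp (- (real N2 * m / 2)) \<le> 1 / (8 * real N1 / \<delta>)"
    using \<open>1 < 8 * real N1 / \<delta>\<close> log_le by (intro exp_neg_le_inverse_if_log2_le) simp_all
  then show "4 * real N1 * exp (- real N2 * m / 2) \<le> \<delta> / 2"
    using assms(3) by (simp add: field_simps)
qed

theorem corollary5:
  fixes n N1 N2 :: nat and \<rho> \<sigma> :: op and q :: "(bool \<times> bool) list pmf"
    and \<epsilon> \<delta> \<Delta> g0 :: real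
  assumes "pure_state n \<rho>" and "pure_state n \<sigma>"
    and "\<epsilon> > 0" and "\<delta> > 0"
    and "0 \<le> g0" and "g0 \<le> 1"
    and "set_pmf q \<subseteq> paulis n"
    and "tv_dist n (p_mix n \<rho> \<sigma>) q < \<Delta>"
    and "real N1 \<ge> 1 / (2 * \<epsilon>\<^sup>2) * log 2 (8 / \<delta>)"
    and "real N2 \<ge> 2 / min (\<epsilon> ^ 4) (\<epsilon>\<^sup>2 * 2 powr (- 2 * max (M0 n \<rho>) (M0 n \<sigma>)))
                    * log 2 (8 * real N1 / \<delta>)"
  shows "measure_pmf.prob (sym_protocol n \<rho> \<sigma> q N1 N2 g0)
           {v. \<bar>v - (1 + Re (tr n (opmult n \<rho> \<sigma>))) / 2\<bar> \<le> 5 * \<epsilon> + 2 * \<Delta>}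
         \<ge> 1 - \<delta>"
proof (cases "\<delta> < 1")
  case False
  then have "1 - \<delta> \<le> 0" by simp
  then show ?thesis by (rule order.trans[OF _ measure_nonneg])
next
  case True
  define w where "w = 2 powr - max (M0 n \<rho>) (M0 n \<sigma>)"
  define m where "m = min (\<epsilon> ^ 4) (\<epsilon>\<^sup>2 * w\<^sup>2)"
  have "w > 0" "m > 0" using \<open>\<epsilon> > 0\<close> by (simp_all add: w_def m_def)
  have "m \<le> \<epsilon> ^ 3 * w"
    using min_power2_le_mult[of "\<epsilon>\<^sup>2" "\<epsilon> * w"] \<open>\<epsilon> > 0\<close> \<open>w > 0\<close>
    by (simp add: m_def power_mult_distrib power2_eq_square power3_eq_cube power4_eq_xxxx mult_ac)
  have "2 powr (- 2 * max (M0 n \<rho>) (M0 n \<sigma>)) = w\<^sup>2"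
    by (simp add: w_def power2_eq_square powr_add[symmetric])
  then have "real N2 \<ge> 2 / m * log 2 (8 * real N1 / \<delta>)"
    using assms(10) by (simp add: m_def)
  note N1 = exp_bound_of_N1_sample_size[OF assms(3,4) True assms(9)]
  note N2 = exp_bound_of_N2_sample_size[OF assms(4) True N1(1) \<open>m > 0\<close> \<open>real N2 \<ge> 2 / m * _\<close>]
  have "1 - \<delta> \<le> 1 - 2 * exp (- 2 * real N1 * \<epsilon>\<^sup>2) - 4 * real N1 * exp (- real N2 * (sqrt m)\<^sup>2 / 2)"
    using N1(2) N2(2) \<open>m > 0\<close> \<open>\<delta> > 0\<close> by simp
  also have "\<dots> \<le> measure_pmf.prob (sym_protocol n \<rho> \<sigma> q N1 N2 g0)
      {v. \<bar>v - (1 + Re (tr n (opmult n \<rho> \<sigma>))) / 2\<bar> \<le> 4 * \<epsilon> + 2 * tv_dist n (p_mix n \<rho> \<sigma>) q}"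
    using assms(1-7) N1(1) N2(1) \<open>m > 0\<close> \<open>m \<le> \<epsilon> ^ 3 * w\<close>
    by (intro prob_sym_protocol_close) (simp_all add: w_def)
  also have "\<dots> \<le> measure_pmf.prob (sym_protocol n \<rho> \<sigma> q N1 N2 g0)
      {v. \<bar>v - (1 + Re (tr n (opmult n \<rho> \<sigma>))) / 2\<bar> \<le> 5 * \<epsilon> + 2 * \<Delta>}"
    using assms(3,8) by (intro measure_pmf.finite_measure_mono) auto
  finally show ?thesis .
qed

end
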